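(* Let $\{(\Gamma_t,\theta_t)\}_{t\in[0,\underline t)}$ solve the framed curvature flow with $\theta$-velocity $$\upsilon_\theta=-(\kappa\,\partial_s\psi_3+2\,\partial_s\kappa\,\psi_3)\kappa^{-2}\psi_1-\kappa\psi_2^{-1}\psi_3^2-(\partial_s^2\kappa-\kappa\psi_3^2)\kappa^{-2}\psi_2$$ (the flow generating a trajectory surface of constant Gaussian curvature $K=0$). Then $\int_{\Gamma_t}\psi_1\,ds$ is independent of $t\in[0,\underline t)$.
   Context: $S^1=\mathbb{R}/2\pi\mathbb{Z}$; closed curves $\Gamma_t$ parametrized by $\gamma(t,\cdot):S^1\to\mathbb{R}^3$, $g=\|\partial_u\gamma\|$, $ds=g\,du$, $\partial_s=g^{-1}\partial_u$; Frenet frame $T,N,B$, curvature $\kappa$, torsion $\tau$. For an angle function $\theta$: $\nu_\theta=\cos\theta N+\sin\theta B$, $\psi_1=\kappa\cos\theta$, $\psi_2=\kappa\sin\theta$, $\psi_3=\tau+\partial_s\theta$; the formula for $\upsilon_\theta$ presupposes $\kappa>0$ and $\psi_2\neq0$. Framed curvature flow: $\partial_t\gamma=\kappa\nu_\theta$, $\partial_t\theta=\upsilon_\theta$. *)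

theory Defs
  imports "HOL-Analysis.Analysis" "HOL-Analysis.Cross3"
begin

text \<open>A family is a function F t u of time t (ranging over an interval I, derivatives
  taken within I, i.e. one-sided at the left endpoint) and of the curve parameter u.\<close>

definition dT :: "real set \<Rightarrow> (real \<Rightarrow> real \<Rightarrow> 'a::real_normed_vector) \<Rightarrow> real \<Rightarrow> real \<Rightarrow> 'a" where
  "dT I G t u = vector_derivative (\<lambda>s. G s u) (at t within I)"

definition dUU :: "(real \<Rightarrow> real \<Rightarrow> 'a::real_normed_vector) \<Rightarrow> real \<Rightarrow> real \<Rightarrow> 'a" where
  "dUU G t u = vector_derivative (\<lambda>v. G t v) (at u)"

fun pder :: "real set \<Rightarrow> bool list \<Rightarrow> (real \<Rightarrow> real \<Rightarrow> 'a::real_normed_vector) \<Rightarrow> real \<Rightarrow> real \<Rightarrow> 'a" where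
  "pder I [] F = F"
| "pder I (True # ds) F = dT I (pder I ds F)"
| "pder I (False # ds) F = dUU (pder I ds F)"

definition smooth_tu :: "real set \<Rightarrow> (real \<Rightarrow> real \<Rightarrow> 'a::real_normed_vector) \<Rightarrow> bool" where
  "smooth_tu I F \<longleftrightarrow>
     (\<forall>ds. continuous_on (I \<times> UNIV) (\<lambda>p. pder I ds F (fst p) (snd p)) \<and>
        (\<forall>t\<in>I. \<forall>u. ((\<lambda>s. pder I ds F s u) has_vector_derivative pder I (True # ds) F t u) (at t within I)
                 \<and> ((\<lambda>v. pder I ds F t v) has_vector_derivative pder I (False # ds) F t u) (at u)))"

definition dU :: "(real \<Rightarrow> 'a::real_normed_vector) \<Rightarrow> real \<Rightarrow> 'a" where
  "dU f u = vector_derivative f (at u)"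

definition spd :: "(real \<Rightarrow> real^3) \<Rightarrow> real \<Rightarrow> real" where
  "spd c u = norm (dU c u)"

definition dS :: "(real \<Rightarrow> real^3) \<Rightarrow> (real \<Rightarrow> 'a::real_normed_vector) \<Rightarrow> real \<Rightarrow> 'a" where
  "dS c f u = (1 / spd c u) *\<^sub>R dU f u"

definition tang :: "(real \<Rightarrow> real^3) \<Rightarrow> real \<Rightarrow> real^3" where
  "tang c u = (1 / spd c u) *\<^sub>R dU c u"

definition curv :: "(real \<Rightarrow> real^3) \<Rightarrow> real \<Rightarrow> real" where
  "curv c u = norm (dS c (tang c) u)"

definition nrm :: "(real \<Rightarrow> real^3) \<Rightarrow> real \<Rightarrow> real^3" where
  "nrm c u = (1 / curv c u) *\<^sub>R dS c (tang c) u"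

definition binrm :: "(real \<Rightarrow> real^3) \<Rightarrow> real \<Rightarrow> real^3" where
  "binrm c u = cross3 (tang c u) (nrm c u)"

definition tors :: "(real \<Rightarrow> real^3) \<Rightarrow> real \<Rightarrow> real" where   \<comment> \<open>N_s = -kappa T + tau B\<close>
  "tors c u = dS c (nrm c) u \<bullet> binrm c u"

definition nu :: "(real \<Rightarrow> real^3) \<Rightarrow> (real \<Rightarrow> real) \<Rightarrow> real \<Rightarrow> real^3" where
  "nu c th u = cos (th u) *\<^sub>R nrm c u + sin (th u) *\<^sub>R binrm c u"

definition psi1 :: "(real \<Rightarrow> real^3) \<Rightarrow> (real \<Rightarrow> real) \<Rightarrow> real \<Rightarrow> real" where
  "psi1 c th u = curv c u * cos (th u)"

definition psi2 :: "(real \<Rightarrow> real^3) \<Rightarrow> (real \<Rightarrow> real) \<Rightarrow> real \<Rightarrow> real" where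
  "psi2 c th u = curv c u * sin (th u)"

definition psi3 :: "(real \<Rightarrow> real^3) \<Rightarrow> (real \<Rightarrow> real) \<Rightarrow> real \<Rightarrow> real" where
  "psi3 c th u = tors c u + dS c th u"

definition upsilon0 :: "(real \<Rightarrow> real^3) \<Rightarrow> (real \<Rightarrow> real) \<Rightarrow> real \<Rightarrow> real" where
  "upsilon0 c th u =
     - (curv c u * dS c (psi3 c th) u + 2 * dS c (curv c) u * psi3 c th u) * (curv c u) powi (-2) * psi1 c th u
     - curv c u * inverse (psi2 c th u) * (psi3 c th u)^2
     - (dS c (dS c (curv c)) u - curv c u * (psi3 c th u)^2) * (curv c u) powi (-2) * psi2 c th u"

end

(*
  Along the flow, psi1 g = T_u . nu, because T_u = g kappa N and nu . N = cos theta.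
  Differentiating in t, using the Frenet equations, the evolution T_t = alpha N + beta B of the
  tangent (read off from gamma_tu = (kappa nu)_u) and the prescribed theta-velocity, everything
  cancels except d/dt (psi1 g) = d/du (d_s kappa). As d_s kappa is 2 pi-periodic in u,
  differentiating under the integral sign shows that the integral of psi1 ds has zero time
  derivative.
*)
theory Submission
  imports Defs
begin

section \<open>Finite-order smoothness of time-dependent families\<close>

definition pdiff_tu :: "real set \<Rightarrow> (real \<Rightarrow> real \<Rightarrow> 'a::real_normed_vector) \<Rightarrow> bool" where
  "pdiff_tu I F \<longleftrightarrow> continuous_on (I \<times> UNIV) (\<lambda>p. F (fst p) (snd p)) \<and>
     (\<forall>t\<in>I. \<forall>u. ((\<lambda>s. F s u) has_vector_derivative dT I F t u) (at t within I)
              \<and> ((\<lambda>v. F t v) has_vector_derivative dUU F t u) (at u))"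

fun smooth_upto :: "real set \<Rightarrow> nat \<Rightarrow> (real \<Rightarrow> real \<Rightarrow> 'a::real_normed_vector) \<Rightarrow> bool" where
  "smooth_upto I 0 F = pdiff_tu I F"
| "smooth_upto I (Suc n) F = (pdiff_tu I F \<and> smooth_upto I n (dT I F) \<and> smooth_upto I n (dUU F))"

lemma pder_snoc: "pder I (ds @ [b]) F = pder I ds (if b then dT I F else dUU F)"
proof (induction ds)
  case (Cons d ds)
  then show ?case by (cases d) auto
qed auto

lemma smooth_upto_iff_pder: "smooth_upto I n F \<longleftrightarrow> (\<forall>ds. length ds \<le> n \<longrightarrow> pdiff_tu I (pder I ds F))"
proof (induction n arbitrary: F)
  case (Suc n)
  have "(\<forall>ds. length ds \<le> Suc n \<longrightarrow> pdiff_tu I (pder I ds F)) \<longleftrightarrow>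
      pdiff_tu I F \<and> (\<forall>b. \<forall>ds. length ds \<le> n \<longrightarrow> pdiff_tu I (pder I (ds @ [b]) F))"
    (is "?all \<longleftrightarrow> ?split")
  proof
    assume all: ?all
    show ?split
      using all[rule_format, of "[]"] all[rule_format, of "_ @ [_]"] by auto
  next
    assume split: ?split
    show ?all
    proof (intro allI impI)
      fix ds :: "bool list"
      assume "length ds \<le> Suc n"
      then show "pdiff_tu I (pder I ds F)"
        using split by (cases ds rule: rev_exhaust) auto
    qed
  qed
  also have "\<dots> \<longleftrightarrow> smooth_upto I (Suc n) F"
    by (auto simp: Suc.IH pder_snoc)
  finally show ?case ..
qed simp

lemma smooth_tu_iff_smooth_upto: "smooth_tu I F \<longleftrightarrow> (\<forall>n. smooth_upto I n F)"
proof -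
  have "smooth_tu I F \<longleftrightarrow> (\<forall>ds. pdiff_tu I (pder I ds F))"
    by (simp add: smooth_tu_def pdiff_tu_def)
  then show ?thesis
    by (auto simp: smooth_upto_iff_pder)
qed

lemma smooth_upto_imp_pdiff_tu: "smooth_upto I n F \<Longrightarrow> pdiff_tu I F"
  by (cases n) auto

lemma smooth_uptoD:
  assumes "smooth_upto I n F"
  shows "continuous_on (I \<times> UNIV) (\<lambda>p. F (fst p) (snd p))"
    and "\<And>t u. t \<in> I \<Longrightarrow> ((\<lambda>s. F s u) has_vector_derivative dT I F t u) (at t within I)"
    and "\<And>t u. t \<in> I \<Longrightarrow> ((\<lambda>v. F t v) has_vector_derivative dUU F t u) (at u)"
  using smooth_upto_imp_pdiff_tu[OF assms] unfolding pdiff_tu_def by auto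

lemma smooth_upto_Suc_imp: "smooth_upto I (Suc n) F \<Longrightarrow> smooth_upto I n F"
proof (induction n arbitrary: F)
  case (Suc n)
  note F = Suc.prems[unfolded smooth_upto.simps(2)[of I "Suc n"]]
  show ?case
    using F Suc.IH[of "dT I F"] Suc.IH[of "dUU F"] by simp
qed simp

lemma smooth_upto_SucD:
  assumes "smooth_upto I (Suc n) F"
  shows "smooth_upto I n (dT I F)" "smooth_upto I n (dUU F)" "smooth_upto I n F"
  using assms smooth_upto_Suc_imp[OF assms] by simp_all

lemma dT_cong:
  assumes "\<And>s. s \<in> I \<Longrightarrow> F s u = G s u" "t \<in> I"
  shows "dT I F t u = dT I G t u"
  unfolding dT_def by (intro vector_derivative_cong_eq always_eventually) (auto simp: assms)

lemma dUU_cong: "(\<And>v. F t v = G t v) \<Longrightarrow> dUU F t u = dUU G t u"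
  by (simp add: dUU_def)

lemma pdiff_tu_cong:
  assumes FG: "\<And>t u. t \<in> I \<Longrightarrow> F t u = G t u" and F: "pdiff_tu I F"
  shows "pdiff_tu I G"
  unfolding pdiff_tu_def
proof (intro conjI ballI allI)
  show "continuous_on (I \<times> UNIV) (\<lambda>p. G (fst p) (snd p))"
    using F unfolding pdiff_tu_def by (auto elim!: continuous_on_eq simp: FG)
next
  fix t u
  assume t: "t \<in> I"
  have F_t: "((\<lambda>s. F s u) has_vector_derivative dT I F t u) (at t within I)"
    using F t unfolding pdiff_tu_def by blast
  have "dT I G t u = dT I F t u"
    by (rule dT_cong[OF _ t]) (simp add: FG)
  then show "((\<lambda>s. G s u) has_vector_derivative dT I G t u) (at t within I)"
    using has_vector_derivative_transform[OF t _ F_t] FG by simp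
  have "((\<lambda>v. F t v) has_vector_derivative dUU F t u) (at u)"
    using F t unfolding pdiff_tu_def by blast
  then show "((\<lambda>v. G t v) has_vector_derivative dUU G t u) (at u)"
    using FG[OF t] by (simp add: dUU_def)
qed

lemma smooth_upto_cong:
  "(\<And>t u. t \<in> I \<Longrightarrow> F t u = G t u) \<Longrightarrow> smooth_upto I n F \<Longrightarrow> smooth_upto I n G"
proof (induction n arbitrary: F G)
  case 0
  then show ?case using pdiff_tu_cong[OF 0(1)] by simp
next
  case (Suc n)
  have "pdiff_tu I F" "smooth_upto I n (dT I F)" "smooth_upto I n (dUU F)"
    using Suc.prems(2) by simp_all
  moreover have "dT I F t u = dT I G t u" "dUU F t u = dUU G t u" if "t \<in> I" for t u
    using Suc.prems(1) that by (auto intro: dT_cong dUU_cong)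
  ultimately show ?case
    using Suc.IH[of "dT I F" "dT I G"] Suc.IH[of "dUU F" "dUU G"] pdiff_tu_cong[OF Suc.prems(1)] by simp
qed

lemma dUU_eqI: "((\<lambda>v. F t v) has_vector_derivative X) (at u) \<Longrightarrow> dUU F t u = X"
  unfolding dUU_def by (rule vector_derivative_at)

lemma bounded_bilinear_cross3: "bounded_bilinear cross3"
  using bilinear_conv_bounded_bilinear bilinear_cross by blast

lemmas has_vector_derivative_inner = bounded_bilinear.has_vector_derivative[OF bounded_bilinear_inner]
lemmas has_vector_derivative_scaleR_vector = bounded_bilinear.has_vector_derivative[OF bounded_bilinear_scaleR]

lemma has_vector_derivative_cos:
  fixes f :: "real \<Rightarrow> real"
  shows "(f has_vector_derivative f') (at x within s) \<Longrightarrow>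
    ((\<lambda>x. cos (f x)) has_vector_derivative (- sin (f x) * f')) (at x within s)"
  unfolding has_real_derivative_iff_has_vector_derivative[symmetric]
  by (rule DERIV_cos[THEN DERIV_chain2])

lemma has_vector_derivative_sin:
  fixes f :: "real \<Rightarrow> real"
  shows "(f has_vector_derivative f') (at x within s) \<Longrightarrow>
    ((\<lambda>x. sin (f x)) has_vector_derivative (cos (f x) * f')) (at x within s)"
  unfolding has_real_derivative_iff_has_vector_derivative[symmetric]
  by (rule DERIV_sin[THEN DERIV_chain2])

locale time_domain =
  fixes I :: "real set"
  assumes nontrivial_at_within: "\<And>t. t \<in> I \<Longrightarrow> at t within I \<noteq> bot"
    and convex_time_domain: "convex I"
begin

lemma dT_eqI: "t \<in> I \<Longrightarrow> ((\<lambda>s. F s u) has_vector_derivative X) (at t within I) \<Longrightarrow> dT I F t u = X"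
  unfolding dT_def by (rule vector_derivative_within[OF nontrivial_at_within])

lemma pdiff_tuI:
  assumes "continuous_on (I \<times> UNIV) (\<lambda>p. F (fst p) (snd p))"
    and dt: "\<And>t u. t \<in> I \<Longrightarrow> ((\<lambda>s. F s u) has_vector_derivative Dt t u) (at t within I)"
    and du: "\<And>t u. t \<in> I \<Longrightarrow> ((\<lambda>v. F t v) has_vector_derivative Du t u) (at u)"
  shows "pdiff_tu I F"
    and "\<And>t u. t \<in> I \<Longrightarrow> dT I F t u = Dt t u"
    and "\<And>t u. t \<in> I \<Longrightarrow> dUU F t u = Du t u"
proof -
  show dT_eq: "\<And>t u. t \<in> I \<Longrightarrow> dT I F t u = Dt t u"
    using dt dT_eqI by blast
  show dUU_eq: "\<And>t u. t \<in> I \<Longrightarrow> dUU F t u = Du t u"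
    using du dUU_eqI by blast
  show "pdiff_tu I F"
    unfolding pdiff_tu_def using assms dT_eq dUU_eq by simp
qed

lemma smooth_upto_0I:
  assumes "continuous_on (I \<times> UNIV) (\<lambda>p. F (fst p) (snd p))"
    and "\<And>t u. t \<in> I \<Longrightarrow> ((\<lambda>s. F s u) has_vector_derivative Dt t u) (at t within I)"
    and "\<And>t u. t \<in> I \<Longrightarrow> ((\<lambda>v. F t v) has_vector_derivative Du t u) (at u)"
  shows "smooth_upto I 0 F"
  using pdiff_tuI[OF assms] by simp

lemma smooth_upto_SucI:
  assumes "continuous_on (I \<times> UNIV) (\<lambda>p. F (fst p) (snd p))"
    and "\<And>t u. t \<in> I \<Longrightarrow> ((\<lambda>s. F s u) has_vector_derivative Dt t u) (at t within I)"
    and "\<And>t u. t \<in> I \<Longrightarrow> ((\<lambda>v. F t v) has_vector_derivative Du t u) (at u)"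
    and "smooth_upto I n Dt" "smooth_upto I n Du"
  shows "smooth_upto I (Suc n) F"
  using pdiff_tuI[OF assms(1-3)] assms(4,5) smooth_upto_cong[of I Dt "dT I F"] smooth_upto_cong[of I Du "dUU F"]
  by simp

lemma smooth_upto_const: "smooth_upto I n (\<lambda>t u. c)"
proof (induction n arbitrary: c)
  case 0
  show ?case
    by (rule smooth_upto_0I[where Dt="\<lambda>t u. 0" and Du="\<lambda>t u. 0"]) (auto intro: derivative_eq_intros)
next
  case (Suc n)
  show ?case
    by (rule smooth_upto_SucI[OF _ _ _ Suc Suc]) (auto intro: derivative_eq_intros)
qed

lemma smooth_upto_add: "smooth_upto I n F \<Longrightarrow> smooth_upto I n G \<Longrightarrow> smooth_upto I n (\<lambda>t u. F t u + G t u)"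
proof (induction n arbitrary: F G)
  case 0
  show ?case
    by (rule smooth_upto_0I[where Dt="\<lambda>t u. dT I F t u + dT I G t u" and Du="\<lambda>t u. dUU F t u + dUU G t u"])
       (auto intro!: derivative_eq_intros continuous_intros smooth_uptoD[OF 0(1)] smooth_uptoD[OF 0(2)])
next
  case (Suc n)
  note F = smooth_upto_SucD[OF Suc.prems(1)] and G = smooth_upto_SucD[OF Suc.prems(2)]
  show ?case
    by (rule smooth_upto_SucI[OF _ _ _ Suc.IH[OF F(1) G(1)] Suc.IH[OF F(2) G(2)]])
       (auto intro!: derivative_eq_intros continuous_intros smooth_uptoD[OF Suc.prems(1)] smooth_uptoD[OF Suc.prems(2)])
qed

lemma smooth_upto_bilinear:
  fixes prod :: "'a::real_normed_vector \<Rightarrow> 'b::real_normed_vector \<Rightarrow> 'c::real_normed_vector"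
  assumes bb: "bounded_bilinear prod"
  shows "smooth_upto I n F \<Longrightarrow> smooth_upto I n G \<Longrightarrow> smooth_upto I n (\<lambda>t u. prod (F t u) (G t u))"
proof (induction n arbitrary: F G)
  case 0
  show ?case
    by (rule smooth_upto_0I[where Dt="\<lambda>t u. prod (F t u) (dT I G t u) + prod (dT I F t u) (G t u)"
          and Du="\<lambda>t u. prod (F t u) (dUU G t u) + prod (dUU F t u) (G t u)"])
       (auto intro!: bounded_bilinear.has_vector_derivative[OF bb] bounded_bilinear.continuous_on[OF bb]
          smooth_uptoD[OF 0(1)] smooth_uptoD[OF 0(2)])
next
  case (Suc n)
  note F = smooth_upto_SucD[OF Suc.prems(1)] and G = smooth_upto_SucD[OF Suc.prems(2)]
  show ?case
    by (rule smooth_upto_SucI[OF _ _ _ smooth_upto_add[OF Suc.IH[OF F(3) G(1)] Suc.IH[OF F(1) G(3)]]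
          smooth_upto_add[OF Suc.IH[OF F(3) G(2)] Suc.IH[OF F(2) G(3)]]])
       (auto intro!: bounded_bilinear.has_vector_derivative[OF bb] bounded_bilinear.continuous_on[OF bb]
          smooth_uptoD[OF Suc.prems(1)] smooth_uptoD[OF Suc.prems(2)])
qed

lemmas smooth_upto_mult = smooth_upto_bilinear[OF bounded_bilinear_mult]
lemmas smooth_upto_scaleR = smooth_upto_bilinear[OF bounded_bilinear_scaleR]
lemmas smooth_upto_inner = smooth_upto_bilinear[OF bounded_bilinear_inner]
lemmas smooth_upto_cross3 = smooth_upto_bilinear[OF bounded_bilinear_cross3]

lemma smooth_upto_uminus: "smooth_upto I n F \<Longrightarrow> smooth_upto I n (\<lambda>t u. - F t u)"
  using smooth_upto_scaleR[OF smooth_upto_const[of n "- 1"]] by (auto elim: smooth_upto_cong[rotated])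

lemma smooth_upto_diff: "smooth_upto I n F \<Longrightarrow> smooth_upto I n G \<Longrightarrow> smooth_upto I n (\<lambda>t u. F t u - G t u)"
  using smooth_upto_add[of n F "\<lambda>t u. - G t u"] smooth_upto_uminus[of n G] by (auto elim: smooth_upto_cong[rotated])

lemma smooth_upto_compose:
  fixes F :: "real \<Rightarrow> real \<Rightarrow> real" and \<phi> \<phi>' :: "real \<Rightarrow> 'b::real_normed_vector"
  assumes \<phi>: "\<And>x. x \<in> S \<Longrightarrow> (\<phi> has_vector_derivative \<phi>' x) (at x)"
    and \<phi>'_closed: "\<And>n G. smooth_upto I n G \<Longrightarrow> (\<And>t u. t \<in> I \<Longrightarrow> G t u \<in> S) \<Longrightarrow>
       smooth_upto I n (\<lambda>t u. \<phi> (G t u)) \<Longrightarrow> smooth_upto I n (\<lambda>t u. \<phi>' (G t u))"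
  shows "smooth_upto I n F \<Longrightarrow> (\<And>t u. t \<in> I \<Longrightarrow> F t u \<in> S) \<Longrightarrow> smooth_upto I n (\<lambda>t u. \<phi> (F t u))"
proof -
  have "continuous_on S \<phi>"
    using \<phi> by (meson continuous_at_imp_continuous_on has_vector_derivative_continuous)
  then have chain: "continuous_on (I \<times> UNIV) (\<lambda>p. \<phi> (F (fst p) (snd p)))"
     "\<And>t u. t \<in> I \<Longrightarrow> ((\<lambda>s. \<phi> (F s u)) has_vector_derivative dT I F t u *\<^sub>R \<phi>' (F t u)) (at t within I)"
     "\<And>t u. t \<in> I \<Longrightarrow> ((\<lambda>v. \<phi> (F t v)) has_vector_derivative dUU F t u *\<^sub>R \<phi>' (F t u)) (at u)"
    if F: "smooth_upto I n F" and F_in: "\<And>t u. t \<in> I \<Longrightarrow> F t u \<in> S" for n F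
  proof -
    show "continuous_on (I \<times> UNIV) (\<lambda>p. \<phi> (F (fst p) (snd p)))"
      by (rule continuous_on_compose2[OF \<open>continuous_on S \<phi>\<close> smooth_uptoD(1)[OF F]]) (auto intro: F_in)
  next
    fix t u
    assume t: "t \<in> I"
    show "((\<lambda>s. \<phi> (F s u)) has_vector_derivative dT I F t u *\<^sub>R \<phi>' (F t u)) (at t within I)"
      using vector_diff_chain_within[OF smooth_uptoD(2)[OF F t] has_vector_derivative_at_within[OF \<phi>[OF F_in[OF t]]]]
      by (simp add: o_def)
    show "((\<lambda>v. \<phi> (F t v)) has_vector_derivative dUU F t u *\<^sub>R \<phi>' (F t u)) (at u)"
      using vector_diff_chain_at[OF smooth_uptoD(3)[OF F t] \<phi>[OF F_in[OF t]]] by (simp add: o_def)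
  qed
  show "smooth_upto I n F \<Longrightarrow> (\<And>t u. t \<in> I \<Longrightarrow> F t u \<in> S) \<Longrightarrow> smooth_upto I n (\<lambda>t u. \<phi> (F t u))"
  proof (induction n arbitrary: F)
    case 0
    show ?case by (rule smooth_upto_0I[OF chain[OF 0]])
  next
    case (Suc n)
    note F = smooth_upto_SucD[OF Suc.prems(1)]
    have \<phi>'_F: "smooth_upto I n (\<lambda>t u. \<phi>' (F t u))"
      by (rule \<phi>'_closed[OF F(3) Suc.prems(2) Suc.IH[OF F(3)]]) (use Suc.prems(2) in auto)
    show ?case
      by (rule smooth_upto_SucI[OF chain[OF Suc.prems] smooth_upto_scaleR[OF F(1) \<phi>'_F]
          smooth_upto_scaleR[OF F(2) \<phi>'_F]])
  qed
qed

lemma smooth_upto_inverse: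
  fixes F :: "real \<Rightarrow> real \<Rightarrow> real"
  assumes "smooth_upto I n F" "\<And>t u. t \<in> I \<Longrightarrow> F t u \<noteq> 0"
  shows "smooth_upto I n (\<lambda>t u. inverse (F t u))"
proof (rule smooth_upto_compose[of "- {0}" inverse "\<lambda>x. - (inverse x * inverse x)", OF _ _ assms(1)])
  show "(inverse has_vector_derivative - (inverse x * inverse x)) (at x)" if "x \<in> - {0}" for x
    using DERIV_inverse'[OF DERIV_ident, of x UNIV] that
    by (simp add: has_real_derivative_iff_has_vector_derivative)
  show "smooth_upto I m (\<lambda>t u. - (inverse (G t u) * inverse (G t u)))"
    if "smooth_upto I m G" "\<And>t u. t \<in> I \<Longrightarrow> G t u \<in> - {0}" "smooth_upto I m (\<lambda>t u. inverse (G t u))"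
    for m and G :: "real \<Rightarrow> real \<Rightarrow> real"
    using smooth_upto_uminus[OF smooth_upto_mult[OF that(3) that(3)]] .
qed (use assms(2) in auto)

lemma smooth_upto_sqrt:
  fixes F :: "real \<Rightarrow> real \<Rightarrow> real"
  assumes "smooth_upto I n F" "\<And>t u. t \<in> I \<Longrightarrow> F t u > 0"
  shows "smooth_upto I n (\<lambda>t u. sqrt (F t u))"
proof (rule smooth_upto_compose[of "{0<..}" sqrt "\<lambda>x. inverse (sqrt x) / 2", OF _ _ assms(1)])
  show "(sqrt has_vector_derivative inverse (sqrt x) / 2) (at x)" if "x \<in> {0<..}" for x
    using that by (auto simp: has_real_derivative_iff_has_vector_derivative[symmetric] intro!: DERIV_real_sqrt)
  show "smooth_upto I m (\<lambda>t u. inverse (sqrt (G t u)) / 2)"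
    if "smooth_upto I m G" "\<And>t u. t \<in> I \<Longrightarrow> G t u \<in> {0<..}" "smooth_upto I m (\<lambda>t u. sqrt (G t u))"
    for m G
  proof -
    have "smooth_upto I m (\<lambda>t u. inverse (sqrt (G t u)) * (1 / 2))"
    proof (rule smooth_upto_mult[OF smooth_upto_inverse[OF that(3)] smooth_upto_const])
      fix t u
      assume "t \<in> I"
      then have "G t u > 0" using that(2) by auto
      then show "sqrt (G t u) \<noteq> 0" by simp
    qed
    then show ?thesis by (rule smooth_upto_cong[rotated]) simp
  qed
qed (use assms(2) in auto)

lemma smooth_upto_cis:
  fixes F :: "real \<Rightarrow> real \<Rightarrow> real"
  assumes "smooth_upto I n F"
  shows "smooth_upto I n (\<lambda>t u. cis (F t u))"
proof (rule smooth_upto_compose[of UNIV cis "\<lambda>x. \<i> * cis x", OF _ _ assms])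
  show "(cis has_vector_derivative \<i> * cis x) (at x)" for x
    unfolding has_vector_derivative_def using has_derivative_cis[OF has_derivative_ident, of x UNIV] by simp
  show "smooth_upto I m (\<lambda>t u. \<i> * cis (G t u))" if "smooth_upto I m (\<lambda>t u. cis (G t u))" for m G
    by (rule smooth_upto_mult[OF smooth_upto_const that])
qed simp

lemma smooth_upto_cos:
  fixes F :: "real \<Rightarrow> real \<Rightarrow> real"
  assumes "smooth_upto I n F"
  shows "smooth_upto I n (\<lambda>t u. cos (F t u))"
  using smooth_upto_inner[OF smooth_upto_cis[OF assms] smooth_upto_const[of n 1]]
  by (rule smooth_upto_cong[rotated]) (simp add: inner_complex_def)

lemma smooth_upto_sin:
  fixes F :: "real \<Rightarrow> real \<Rightarrow> real"
  assumes "smooth_upto I n F"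
  shows "smooth_upto I n (\<lambda>t u. sin (F t u))"
  using smooth_upto_inner[OF smooth_upto_cis[OF assms] smooth_upto_const[of n "\<i>"]]
  by (rule smooth_upto_cong[rotated]) (simp add: inner_complex_def)

lemma smooth_upto_norm:
  fixes F :: "real \<Rightarrow> real \<Rightarrow> 'a::real_inner"
  assumes "smooth_upto I n F" "\<And>t u. t \<in> I \<Longrightarrow> F t u \<noteq> 0"
  shows "smooth_upto I n (\<lambda>t u. norm (F t u))"
  using smooth_upto_sqrt[OF smooth_upto_inner[OF assms(1) assms(1)]] assms(2)
  by (auto elim!: smooth_upto_cong[rotated] simp: norm_eq_sqrt_inner)

lemma smooth_tuD:
  assumes "smooth_tu I F"
  shows "continuous_on (I \<times> UNIV) (\<lambda>p. F (fst p) (snd p))"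
    and "\<And>t u. t \<in> I \<Longrightarrow> ((\<lambda>s. F s u) has_vector_derivative dT I F t u) (at t within I)"
    and "\<And>t u. t \<in> I \<Longrightarrow> ((\<lambda>v. F t v) has_vector_derivative dUU F t u) (at u)"
  using assms smooth_uptoD unfolding smooth_tu_iff_smooth_upto by blast+

lemma smooth_tu_continuous_on_slice:
  assumes "smooth_tu I F" "t \<in> I"
  shows "continuous_on S (F t)"
proof -
  have "continuous_on S (\<lambda>v. F (fst (t, v)) (snd (t, v)))"
    by (rule continuous_on_compose2[OF smooth_tuD(1)[OF assms(1)]]) (auto intro!: continuous_intros simp: assms(2))
  then show ?thesis by simp
qed

lemma smooth_tu_dT: "smooth_tu I F \<Longrightarrow> smooth_tu I (dT I F)"
  unfolding smooth_tu_iff_smooth_upto using smooth_upto_SucD by blast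
lemma smooth_tu_dUU: "smooth_tu I F \<Longrightarrow> smooth_tu I (dUU F)"
  unfolding smooth_tu_iff_smooth_upto using smooth_upto_SucD by blast
lemma smooth_tu_cong: "smooth_tu I F \<Longrightarrow> (\<And>t u. t \<in> I \<Longrightarrow> F t u = G t u) \<Longrightarrow> smooth_tu I G"
  unfolding smooth_tu_iff_smooth_upto using smooth_upto_cong by blast
lemma smooth_tu_add: "smooth_tu I F \<Longrightarrow> smooth_tu I G \<Longrightarrow> smooth_tu I (\<lambda>t u. F t u + G t u)"
  unfolding smooth_tu_iff_smooth_upto using smooth_upto_add by blast
lemma smooth_tu_diff: "smooth_tu I F \<Longrightarrow> smooth_tu I G \<Longrightarrow> smooth_tu I (\<lambda>t u. F t u - G t u)"
  unfolding smooth_tu_iff_smooth_upto using smooth_upto_diff by blast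
lemma smooth_tu_mult:
  "smooth_tu I F \<Longrightarrow> smooth_tu I G \<Longrightarrow> smooth_tu I (\<lambda>t u. F t u * G t u :: 'a::real_normed_algebra)"
  unfolding smooth_tu_iff_smooth_upto using smooth_upto_mult by blast
lemma smooth_tu_scaleR: "smooth_tu I F \<Longrightarrow> smooth_tu I G \<Longrightarrow> smooth_tu I (\<lambda>t u. F t u *\<^sub>R G t u)"
  unfolding smooth_tu_iff_smooth_upto using smooth_upto_scaleR by blast
lemma smooth_tu_inner: "smooth_tu I F \<Longrightarrow> smooth_tu I G \<Longrightarrow> smooth_tu I (\<lambda>t u. F t u \<bullet> G t u)"
  unfolding smooth_tu_iff_smooth_upto using smooth_upto_inner by blast
lemma smooth_tu_cross3: "smooth_tu I F \<Longrightarrow> smooth_tu I G \<Longrightarrow> smooth_tu I (\<lambda>t u. cross3 (F t u) (G t u))"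
  unfolding smooth_tu_iff_smooth_upto using smooth_upto_cross3 by blast
lemma smooth_tu_inverse:
  "smooth_tu I F \<Longrightarrow> (\<And>t u. t \<in> I \<Longrightarrow> F t u \<noteq> 0) \<Longrightarrow> smooth_tu I (\<lambda>t u. inverse (F t u :: real))"
  unfolding smooth_tu_iff_smooth_upto using smooth_upto_inverse by blast
lemma smooth_tu_cos: "smooth_tu I F \<Longrightarrow> smooth_tu I (\<lambda>t u. cos (F t u :: real))"
  unfolding smooth_tu_iff_smooth_upto using smooth_upto_cos by blast
lemma smooth_tu_sin: "smooth_tu I F \<Longrightarrow> smooth_tu I (\<lambda>t u. sin (F t u :: real))"
  unfolding smooth_tu_iff_smooth_upto using smooth_upto_sin by blast
lemma smooth_tu_norm:
  "smooth_tu I F \<Longrightarrow> (\<And>t u. t \<in> I \<Longrightarrow> F t u \<noteq> 0) \<Longrightarrow> smooth_tu I (\<lambda>t u. norm (F t u :: 'a::real_inner))"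
  unfolding smooth_tu_iff_smooth_upto using smooth_upto_norm by blast

lemma dT_inner_const_eq_0:
  assumes "smooth_tu I X" "smooth_tu I Y" "t \<in> I" "\<And>s. s \<in> I \<Longrightarrow> X s u \<bullet> Y s u = c"
  shows "X t u \<bullet> dT I Y t u + dT I X t u \<bullet> Y t u = 0"
proof -
  have "((\<lambda>s. X s u \<bullet> Y s u) has_vector_derivative X t u \<bullet> dT I Y t u + dT I X t u \<bullet> Y t u) (at t within I)"
    by (rule has_vector_derivative_inner[OF smooth_tuD(2)[OF assms(1,3)] smooth_tuD(2)[OF assms(2,3)]])
  then have "((\<lambda>s. c) has_vector_derivative X t u \<bullet> dT I Y t u + dT I X t u \<bullet> Y t u) (at t within I)"
    by (rule has_vector_derivative_transform[OF assms(3), rotated]) (simp add: assms(4))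
  then show ?thesis
    using vector_derivative_unique_within[OF nontrivial_at_within[OF assms(3)]] has_vector_derivative_const by blast
qed

lemma dUU_inner_const_eq_0:
  assumes "smooth_tu I X" "smooth_tu I Y" "t \<in> I" "\<And>v. X t v \<bullet> Y t v = c"
  shows "X t u \<bullet> dUU Y t u + dUU X t u \<bullet> Y t u = 0"
proof -
  have "((\<lambda>v. X t v \<bullet> Y t v) has_vector_derivative X t u \<bullet> dUU Y t u + dUU X t u \<bullet> Y t u) (at u)"
    by (rule has_vector_derivative_inner[OF smooth_tuD(3)[OF assms(1,3)] smooth_tuD(3)[OF assms(2,3)]])
  then have "((\<lambda>v. c) has_vector_derivative X t u \<bullet> dUU Y t u + dUU X t u \<bullet> Y t u) (at u)"
    using assms(4) by simp
  then show ?thesis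
    using vector_derivative_unique_at has_vector_derivative_const by blast
qed

text \<open>Mixed partials commute: write \<open>F t u = F t a + \<integral>\<^sub>a\<^sup>u F\<^sub>u t\<close> and differentiate under the
  integral sign.\<close>

lemma dT_dUU_commute:
  fixes F :: "real \<Rightarrow> real \<Rightarrow> 'a::euclidean_space"
  assumes F: "smooth_tu I F" and t0: "t0 \<in> I"
  shows "dT I (dUU F) t0 u0 = dUU (dT I F) t0 u0"
proof -
  define a b where "a = u0 - 1" and "b = u0 + 1"
  have Fu: "smooth_tu I (dUU F)" and Fut: "smooth_tu I (dT I (dUU F))"
    using F by (auto intro: smooth_tu_dUU smooth_tu_dT)
  have ftc: "F t u = F t a + integral {a..u} (dUU F t)" if t: "t \<in> I" and u: "u \<in> {a..b}" for t u
  proof -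
    have "(dUU F t has_integral (F t u - F t a)) {a..u}"
      by (rule fundamental_theorem_of_calculus)
         (use u smooth_tuD(3)[OF F t] in \<open>auto intro: has_vector_derivative_at_within\<close>)
    then show ?thesis by (simp add: integral_unique)
  qed
  have leibniz: "((\<lambda>t. integral {a..u} (dUU F t)) has_vector_derivative integral {a..u} (dT I (dUU F) t0))
      (at t0 within I)" for u
  proof -
    have "((\<lambda>t. integral (cbox a u) (dUU F t)) has_vector_derivative integral (cbox a u) (dT I (dUU F) t0))
        (at t0 within I)"
    proof (rule leibniz_rule_vector_derivative[OF _ _ _ t0 convex_time_domain])
      show "((\<lambda>t. dUU F t v) has_vector_derivative dT I (dUU F) t v) (at t within I)" if "t \<in> I" for t v
        using smooth_tuD(2)[OF Fu that] .
      show "dUU F t integrable_on cbox a u" if "t \<in> I" for t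
        by (rule integrable_continuous[OF smooth_tu_continuous_on_slice[OF Fu that]])
      show "continuous_on (I \<times> cbox a u) (\<lambda>(t, v). dT I (dUU F) t v)"
        using continuous_on_subset[OF smooth_tuD(1)[OF Fut], of "I \<times> cbox a u"] by (auto simp: case_prod_beta)
    qed
    then show ?thesis by simp
  qed
  have dT_F: "dT I F t0 u = dT I F t0 a + integral {a..u} (dT I (dUU F) t0)" if u: "u \<in> {a..b}" for u
  proof (rule dT_eqI[OF t0])
    have "((\<lambda>t. F t a + integral {a..u} (dUU F t)) has_vector_derivative
        dT I F t0 a + integral {a..u} (dT I (dUU F) t0)) (at t0 within I)"
      by (intro derivative_intros smooth_tuD(2)[OF F t0] leibniz)
    then show "((\<lambda>t. F t u) has_vector_derivative dT I F t0 a + integral {a..u} (dT I (dUU F) t0)) (at t0 within I)"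
      by (rule has_vector_derivative_transform[OF t0, rotated]) (rule ftc[OF _ u])
  qed
  have "((\<lambda>u. integral {a..u} (dT I (dUU F) t0)) has_vector_derivative dT I (dUU F) t0 u0)
      (at u0 within {a..b})"
    by (rule integral_has_vector_derivative[OF smooth_tu_continuous_on_slice[OF Fut t0]]) (auto simp: a_def b_def)
  then have "((\<lambda>u. dT I F t0 a + integral {a..u} (dT I (dUU F) t0)) has_vector_derivative dT I (dUU F) t0 u0)
      (at u0 within {a..b})"
    using has_vector_derivative_add[OF has_vector_derivative_const[of "dT I F t0 a"]] by simp
  moreover have "at u0 within {a..b} = at u0"
    by (rule at_within_interior) (auto simp: a_def b_def)
  ultimately have "((\<lambda>u. dT I F t0 a + integral {a..u} (dT I (dUU F) t0)) has_vector_derivative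
      dT I (dUU F) t0 u0) (at u0)"
    by simp
  then have "((\<lambda>v. dT I F t0 v) has_vector_derivative dT I (dUU F) t0 u0) (at u0)"
  proof (rule has_vector_derivative_transform_within_open[where S="{a<..<b}"])
    show "u0 \<in> {a<..<b}" by (simp add: a_def b_def)
    show "dT I F t0 a + integral {a..v} (dT I (dUU F) t0) = dT I F t0 v" if "v \<in> {a<..<b}" for v
      using dT_F[of v] that by simp
  qed simp
  then show ?thesis
    using smooth_tuD(3)[OF smooth_tu_dT[OF F] t0] vector_derivative_unique_at by metis
qed

lemma integral_constant_if_dT_eq_dUU:
  fixes F G :: "real \<Rightarrow> real \<Rightarrow> real"
  assumes F: "smooth_tu I F" and G: "smooth_tu I G" and "a \<le> b"
    and dT_F: "\<And>t u. t \<in> I \<Longrightarrow> dT I F t u = dUU G t u"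
    and G_ends: "\<And>t. t \<in> I \<Longrightarrow> G t b = G t a"
  shows "\<exists>C. \<forall>t\<in>I. integral {a..b} (F t) = C"
proof (rule has_field_derivative_zero_constant[OF convex_time_domain])
  fix t
  assume t: "t \<in> I"
  have "((\<lambda>t. integral (cbox a b) (F t)) has_field_derivative integral (cbox a b) (dT I F t)) (at t within I)"
  proof (rule leibniz_rule_field_derivative[OF _ _ _ t convex_time_domain])
    show "((\<lambda>s. F s v) has_field_derivative dT I F s v) (at s within I)" if "s \<in> I" for s v
      using smooth_tuD(2)[OF F that] by (simp add: has_real_derivative_iff_has_vector_derivative)
    show "F s integrable_on cbox a b" if "s \<in> I" for s
      by (rule integrable_continuous[OF smooth_tu_continuous_on_slice[OF F that]])
    show "continuous_on (I \<times> cbox a b) (\<lambda>(s, v). dT I F s v)"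
      using continuous_on_subset[OF smooth_tuD(1)[OF smooth_tu_dT[OF F]], of "I \<times> cbox a b"]
      by (auto simp: case_prod_beta)
  qed
  moreover have "(dUU G t has_integral (G t b - G t a)) {a..b}"
    by (rule fundamental_theorem_of_calculus)
       (use \<open>a \<le> b\<close> smooth_tuD(3)[OF G t] in \<open>auto intro: has_vector_derivative_at_within\<close>)
  moreover have "dT I F t = dUU G t"
    using dT_F[OF t] by auto
  ultimately show "((\<lambda>t. integral {a..b} (F t)) has_field_derivative 0) (at t within I)"
    using G_ends[OF t] by (simp add: integral_unique)
qed

end

section \<open>Periodic curves\<close>

definition periodic :: "real \<Rightarrow> (real \<Rightarrow> 'a) \<Rightarrow> bool" where
  "periodic p f \<longleftrightarrow> (\<forall>v. f (v + p) = f v)"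

lemma has_vector_derivative_shift:
  fixes f :: "real \<Rightarrow> 'a::real_normed_vector"
  assumes "\<And>x. f (x + c) = f x" and "(f has_vector_derivative D) (at u)"
  shows "(f has_vector_derivative D) (at (u + c))"
proof -
  have "((f \<circ> (\<lambda>x. x - c)) has_vector_derivative 1 *\<^sub>R D) (at (u + c))"
    by (rule vector_diff_chain_at) (auto intro!: derivative_eq_intros simp: assms(2))
  moreover have "f \<circ> (\<lambda>x. x - c) = f"
    using assms(1)[of "_ - c"] by (auto simp: o_def)
  ultimately show ?thesis by simp
qed

lemma periodic_dU:
  fixes f :: "real \<Rightarrow> 'a::real_normed_vector"
  assumes "periodic p f"
  shows "periodic p (dU f)"
proof -
  have plus_p: "f (x + p) = f x" and minus_p: "f (x + - p) = f x" for x
    using assms[unfolded periodic_def, rule_format, of x] assms[unfolded periodic_def, rule_format, of "x - p"]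
    by simp_all
  have "(f has_vector_derivative D) (at (v + p)) \<longleftrightarrow> (f has_vector_derivative D) (at v)" for v D
    using has_vector_derivative_shift[of f p D v, OF plus_p] has_vector_derivative_shift[of f "- p" D "v + p", OF minus_p]
    by auto
  then show ?thesis
    unfolding periodic_def dU_def vector_derivative_def by simp
qed

lemma periodic_dS: "periodic p c \<Longrightarrow> periodic p f \<Longrightarrow> periodic p (dS c f)"
  using periodic_dU[of p c] periodic_dU[of p f] by (simp add: periodic_def dS_def spd_def)

lemma periodic_tang: "periodic p c \<Longrightarrow> periodic p (tang c)"
  using periodic_dU[of p c] by (simp add: periodic_def tang_def spd_def)

lemma periodic_curv: "periodic p c \<Longrightarrow> periodic p (curv c)"
  using periodic_dS[OF _ periodic_tang, of p c] by (simp add: periodic_def curv_def)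

section \<open>The framed curvature flow\<close>

lemma eq_if_inner_orthonormal_frame_eq:
  fixes a b v w :: "real^3"
  assumes "a \<bullet> a = 1" "b \<bullet> b = 1" "a \<bullet> b = 0"
    and "v \<bullet> a = w \<bullet> a" "v \<bullet> b = w \<bullet> b" "v \<bullet> cross3 a b = w \<bullet> cross3 a b"
  shows "v = w"
proof -
  define d where "d = v - w"
  have "d \<bullet> a = 0" "d \<bullet> b = 0" "d \<bullet> cross3 a b = 0"
    using assms by (auto simp: d_def inner_diff_left)
  then have "cross3 d (cross3 a b) = 0"
    using Lagrange[of d a b] by (simp add: inner_commute)
  then have "cross3 (cross3 a b) d = 0"
    using cross_skew by (metis neg_equal_0_iff_equal)
  moreover have "cross3 a b \<bullet> cross3 a b = 1"
    using dot_cross[of a b a b] assms(1-3) by (simp add: inner_commute)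
  ultimately have "(norm d)\<^sup>2 = 0"
    using norm_cross_dot[of "cross3 a b" d] \<open>d \<bullet> cross3 a b = 0\<close>
    by (simp add: inner_commute power2_norm_eq_inner[symmetric] power_mult_distrib)
  then show ?thesis by (simp add: d_def)
qed

lemmas inner_linear_simps = inner_simps inner_minus_left inner_minus_right

text \<open>The only place where the particular \<open>\<theta>\<close>-velocity enters: with \<open>\<upsilon>\<^sub>\<theta>\<close> substituted
  (denominators cleared, \<open>x\<close> standing for \<open>g \<kappa> sin \<theta> \<partial>\<^sub>t\<theta>\<close>), the time derivative of \<open>\<psi>\<^sub>1 g\<close>
  collapses to \<open>\<partial>\<^sub>u \<kappa>\<^sub>s\<close>.\<close>

lemma upsilon0_cancellation:
  fixes g k ks ks' p3 p3' th' c s g\<tau> x a b a' b' :: real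
  assumes "s\<^sup>2 + c\<^sup>2 = 1"
    and "g\<tau> = g * p3 - th'"
    and "x = - s * c * (k * p3' + 2 * g * ks * p3) - g * k * p3\<^sup>2 - (ks' - g * k * p3\<^sup>2) * s\<^sup>2"
    and "a = ks * c - k * p3 * s" and "b = ks * s + k * p3 * c"
    and "a' = (ks * (- s * th') + ks' * c) - (k * p3 * (c * th') + (k * p3' + g * ks * p3) * s)"
    and "b' = (ks * (c * th') + ks' * s) + (k * p3 * (- s * th') + (k * p3' + g * ks * p3) * c)"
  shows "(- x - s * (a * g\<tau> + b')) + (a * (g\<tau> * s) + a' * c + b * (- (g\<tau> * c)) + b' * s) = ks'"
  using assms(1) unfolding assms(2-7) by algebra

locale framed_flow = time_domain +
  fixes \<gamma> :: "real \<Rightarrow> real \<Rightarrow> real^3" and \<theta> :: "real \<Rightarrow> real \<Rightarrow> real"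
  assumes smooth_\<gamma>: "smooth_tu I \<gamma>" and smooth_\<theta>: "smooth_tu I \<theta>"
    and spd_pos: "\<And>t u. t \<in> I \<Longrightarrow> spd (\<gamma> t) u > 0"
    and curv_pos: "\<And>t u. t \<in> I \<Longrightarrow> curv (\<gamma> t) u > 0"
    and psi2_nonzero: "\<And>t u. t \<in> I \<Longrightarrow> psi2 (\<gamma> t) (\<theta> t) u \<noteq> 0"
    and flow_\<gamma>: "\<And>t u. t \<in> I \<Longrightarrow>
          ((\<lambda>s. \<gamma> s u) has_vector_derivative (curv (\<gamma> t) u *\<^sub>R nu (\<gamma> t) (\<theta> t) u)) (at t within I)"
    and flow_\<theta>: "\<And>t u. t \<in> I \<Longrightarrow>
          ((\<lambda>s. \<theta> s u) has_vector_derivative upsilon0 (\<gamma> t) (\<theta> t) u) (at t within I)"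
begin

definition "g t u = spd (\<gamma> t) u"
definition "T t u = tang (\<gamma> t) u"
definition "N t u = nrm (\<gamma> t) u"
definition "B t u = binrm (\<gamma> t) u"
definition "\<kappa> t u = curv (\<gamma> t) u"
definition "\<tau> t u = tors (\<gamma> t) u"
definition "\<nu> t u = nu (\<gamma> t) (\<theta> t) u"
definition "\<psi>\<^sub>1 t u = psi1 (\<gamma> t) (\<theta> t) u"
definition "\<psi>\<^sub>2 t u = psi2 (\<gamma> t) (\<theta> t) u"
definition "\<psi>\<^sub>3 t u = psi3 (\<gamma> t) (\<theta> t) u"
definition "\<kappa>\<^sub>s t u = dS (\<gamma> t) (curv (\<gamma> t)) u"

lemma dS_eq: "dS (\<gamma> t) (\<lambda>v. H t v) u = (1 / g t u) *\<^sub>R dUU H t u"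
  by (simp add: dS_def dU_def dUU_def g_def)

lemma g_eq: "g t u = norm (dUU \<gamma> t u)"
  by (simp add: g_def spd_def dU_def dUU_def)
lemma T_eq: "T t u = (1 / g t u) *\<^sub>R dUU \<gamma> t u"
  by (simp add: T_def tang_def g_def dU_def dUU_def)
lemma \<kappa>_eq: "\<kappa> t u = norm ((1 / g t u) *\<^sub>R dUU T t u)"
  using dS_eq[of t T u] by (simp add: \<kappa>_def curv_def T_def[abs_def])
lemma N_eq: "N t u = (1 / \<kappa> t u) *\<^sub>R ((1 / g t u) *\<^sub>R dUU T t u)"
  using dS_eq[of t T u] by (simp add: \<kappa>_def N_def nrm_def T_def[abs_def])
lemma B_eq: "B t u = cross3 (T t u) (N t u)"
  by (simp add: B_def binrm_def T_def N_def)
lemma \<tau>_eq: "\<tau> t u = ((1 / g t u) *\<^sub>R dUU N t u) \<bullet> B t u"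
  using dS_eq[of t N u] by (simp add: \<tau>_def tors_def N_def[abs_def] B_def)
lemma \<nu>_eq: "\<nu> t u = cos (\<theta> t u) *\<^sub>R N t u + sin (\<theta> t u) *\<^sub>R B t u"
  by (simp add: \<nu>_def nu_def N_def B_def)
lemma \<psi>\<^sub>1_eq: "\<psi>\<^sub>1 t u = \<kappa> t u * cos (\<theta> t u)"
  by (simp add: \<psi>\<^sub>1_def psi1_def \<kappa>_def)
lemma \<psi>\<^sub>2_eq: "\<psi>\<^sub>2 t u = \<kappa> t u * sin (\<theta> t u)"
  by (simp add: \<psi>\<^sub>2_def psi2_def \<kappa>_def)
lemma \<psi>\<^sub>3_eq: "\<psi>\<^sub>3 t u = \<tau> t u + (1 / g t u) * dUU \<theta> t u"
  using dS_eq[of t \<theta> u] by (simp add: \<psi>\<^sub>3_def psi3_def \<tau>_def)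
lemma \<kappa>\<^sub>s_eq: "\<kappa>\<^sub>s t u = (1 / g t u) * dUU \<kappa> t u"
  using dS_eq[of t \<kappa> u] by (simp add: \<kappa>\<^sub>s_def \<kappa>_def[abs_def])

lemma g_pos: "t \<in> I \<Longrightarrow> g t u > 0"
  using spd_pos by (simp add: g_def)
lemma \<kappa>_pos: "t \<in> I \<Longrightarrow> \<kappa> t u > 0"
  using curv_pos by (simp add: \<kappa>_def)
lemma sin_\<theta>_nonzero: "t \<in> I \<Longrightarrow> sin (\<theta> t u) \<noteq> 0"
  using psi2_nonzero by (simp add: psi2_def)

lemma smooth_g: "smooth_tu I g"
proof -
  have "smooth_tu I (\<lambda>t u. norm (dUU \<gamma> t u))"
    by (rule smooth_tu_norm[OF smooth_tu_dUU[OF smooth_\<gamma>]]) (metis g_pos g_eq norm_zero less_irrefl)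
  then show ?thesis by (rule smooth_tu_cong) (simp add: g_eq)
qed
lemma smooth_inverse_g: "smooth_tu I (\<lambda>t u. 1 / g t u)"
proof -
  have "smooth_tu I (\<lambda>t u. inverse (g t u))"
    by (rule smooth_tu_inverse[OF smooth_g]) (metis g_pos less_irrefl)
  then show ?thesis by (rule smooth_tu_cong) (simp add: divide_inverse)
qed
lemma smooth_T: "smooth_tu I T"
  using smooth_tu_scaleR[OF smooth_inverse_g smooth_tu_dUU[OF smooth_\<gamma>]] by (rule smooth_tu_cong) (simp add: T_eq)
lemma smooth_\<kappa>: "smooth_tu I \<kappa>"
proof -
  have "smooth_tu I (\<lambda>t u. norm ((1 / g t u) *\<^sub>R dUU T t u))"
    by (rule smooth_tu_norm[OF smooth_tu_scaleR[OF smooth_inverse_g smooth_tu_dUU[OF smooth_T]]])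
       (metis \<kappa>_pos \<kappa>_eq norm_zero less_irrefl)
  then show ?thesis by (rule smooth_tu_cong) (simp add: \<kappa>_eq)
qed
lemma smooth_inverse_\<kappa>: "smooth_tu I (\<lambda>t u. 1 / \<kappa> t u)"
proof -
  have "smooth_tu I (\<lambda>t u. inverse (\<kappa> t u))"
    by (rule smooth_tu_inverse[OF smooth_\<kappa>]) (metis \<kappa>_pos less_irrefl)
  then show ?thesis by (rule smooth_tu_cong) (simp add: divide_inverse)
qed
lemma smooth_N: "smooth_tu I N"
  using smooth_tu_scaleR[OF smooth_inverse_\<kappa> smooth_tu_scaleR[OF smooth_inverse_g smooth_tu_dUU[OF smooth_T]]]
  by (rule smooth_tu_cong) (simp add: N_eq)
lemma smooth_B: "smooth_tu I B"
  using smooth_tu_cross3[OF smooth_T smooth_N] by (rule smooth_tu_cong) (simp add: B_eq)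
lemma smooth_\<tau>: "smooth_tu I \<tau>"
  using smooth_tu_inner[OF smooth_tu_scaleR[OF smooth_inverse_g smooth_tu_dUU[OF smooth_N]] smooth_B]
  by (rule smooth_tu_cong) (simp add: \<tau>_eq)
lemma smooth_\<nu>: "smooth_tu I \<nu>"
  using smooth_tu_add[OF smooth_tu_scaleR[OF smooth_tu_cos[OF smooth_\<theta>] smooth_N]
      smooth_tu_scaleR[OF smooth_tu_sin[OF smooth_\<theta>] smooth_B]]
  by (rule smooth_tu_cong) (simp add: \<nu>_eq)
lemma smooth_\<psi>\<^sub>1: "smooth_tu I \<psi>\<^sub>1"
  using smooth_tu_mult[OF smooth_\<kappa> smooth_tu_cos[OF smooth_\<theta>]] by (rule smooth_tu_cong) (simp add: \<psi>\<^sub>1_eq)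
lemma smooth_\<psi>\<^sub>3: "smooth_tu I \<psi>\<^sub>3"
  using smooth_tu_add[OF smooth_\<tau> smooth_tu_mult[OF smooth_inverse_g smooth_tu_dUU[OF smooth_\<theta>]]]
  by (rule smooth_tu_cong) (simp add: \<psi>\<^sub>3_eq)
lemma smooth_\<kappa>\<^sub>s: "smooth_tu I \<kappa>\<^sub>s"
  using smooth_tu_mult[OF smooth_inverse_g smooth_tu_dUU[OF smooth_\<kappa>]] by (rule smooth_tu_cong) (simp add: \<kappa>\<^sub>s_eq)

lemma T_unit: "t \<in> I \<Longrightarrow> T t u \<bullet> T t u = 1"
  using g_pos[of t u] by (simp add: T_eq g_eq power2_norm_eq_inner[symmetric] field_simps power2_eq_square)

lemma dUU_\<gamma>_eq: "t \<in> I \<Longrightarrow> dUU \<gamma> t u = g t u *\<^sub>R T t u"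
  using g_pos[of t u] by (simp add: T_eq)

lemma dUU_T: "t \<in> I \<Longrightarrow> dUU T t u = (g t u * \<kappa> t u) *\<^sub>R N t u"
  using g_pos[of t u] \<kappa>_pos[of t u] by (simp add: N_eq)

lemma N_unit: "t \<in> I \<Longrightarrow> N t u \<bullet> N t u = 1"
proof -
  assume t: "t \<in> I"
  have "norm (N t u) = \<bar>1 / \<kappa> t u\<bar> * norm ((1 / g t u) *\<^sub>R dUU T t u)"
    unfolding N_eq by (rule norm_scaleR)
  also have "\<dots> = \<bar>1 / \<kappa> t u\<bar> * \<kappa> t u"
    by (simp only: \<kappa>_eq[symmetric])
  also have "\<dots> = 1" using \<kappa>_pos[OF t, of u] by simp
  finally show ?thesis by (metis norm_eq_sqrt_inner real_sqrt_eq_1_iff)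
qed

lemma T_N_orthogonal: "t \<in> I \<Longrightarrow> T t u \<bullet> N t u = 0"
proof -
  assume t: "t \<in> I"
  have "T t u \<bullet> dUU T t u + dUU T t u \<bullet> T t u = 0"
    by (rule dUU_inner_const_eq_0[OF smooth_T smooth_T t]) (rule T_unit[OF t])
  then have "(g t u * \<kappa> t u) * (T t u \<bullet> N t u) = 0"
    by (auto simp: dUU_T[OF t] inner_commute)
  then show ?thesis using g_pos[OF t, of u] \<kappa>_pos[OF t, of u] by auto
qed

lemma B_frame:
  assumes t: "t \<in> I"
  shows "B t u \<bullet> T t u = 0" "B t u \<bullet> N t u = 0" "B t u \<bullet> B t u = 1"
    "T t u \<bullet> B t u = 0" "N t u \<bullet> B t u = 0" "N t u \<bullet> T t u = 0"
  using dot_cross_self[of "T t u" "N t u"] dot_cross[of "T t u" "N t u" "T t u" "N t u"]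
    T_unit[OF t, of u] N_unit[OF t, of u] T_N_orthogonal[OF t, of u]
  by (auto simp: B_eq inner_commute)

lemmas frame_simps = T_unit N_unit T_N_orthogonal B_frame

lemma frame_eqI:
  assumes "t \<in> I"
    and "v \<bullet> T t u = w \<bullet> T t u" "v \<bullet> N t u = w \<bullet> N t u" "v \<bullet> B t u = w \<bullet> B t u"
  shows "v = w"
  using eq_if_inner_orthonormal_frame_eq[of "T t u" "N t u" v w] assms frame_simps[OF assms(1)]
  by (simp add: B_eq)

lemma dUU_N: "t \<in> I \<Longrightarrow> dUU N t u = (- (g t u * \<kappa> t u)) *\<^sub>R T t u + (g t u * \<tau> t u) *\<^sub>R B t u"
proof -
  assume t: "t \<in> I"
  have T_N: "T t u \<bullet> dUU N t u + dUU T t u \<bullet> N t u = 0"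
    by (rule dUU_inner_const_eq_0[OF smooth_T smooth_N t]) (rule T_N_orthogonal[OF t])
  have N_N: "N t u \<bullet> dUU N t u + dUU N t u \<bullet> N t u = 0"
    by (rule dUU_inner_const_eq_0[OF smooth_N smooth_N t]) (rule N_unit[OF t])
  have dN_B: "dUU N t u \<bullet> B t u = g t u * \<tau> t u"
    using g_pos[OF t, of u] by (simp add: \<tau>_eq)
  show ?thesis
    by (rule frame_eqI[where u=u, OF t])
       (use T_N N_N dN_B in \<open>simp_all add: inner_linear_simps frame_simps[OF t] dUU_T[OF t] inner_commute\<close>)
qed

lemma dUU_B: "t \<in> I \<Longrightarrow> dUU B t u = (- (g t u * \<tau> t u)) *\<^sub>R N t u"
proof -
  assume t: "t \<in> I"
  have B_T: "B t u \<bullet> dUU T t u + dUU B t u \<bullet> T t u = 0"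
    by (rule dUU_inner_const_eq_0[OF smooth_B smooth_T t]) (rule B_frame[OF t])
  have B_N: "B t u \<bullet> dUU N t u + dUU B t u \<bullet> N t u = 0"
    by (rule dUU_inner_const_eq_0[OF smooth_B smooth_N t]) (rule B_frame[OF t])
  have B_B: "B t u \<bullet> dUU B t u + dUU B t u \<bullet> B t u = 0"
    by (rule dUU_inner_const_eq_0[OF smooth_B smooth_B t]) (rule B_frame[OF t])
  show ?thesis
    by (rule frame_eqI[where u=u, OF t])
       (use B_T B_N B_B in \<open>simp_all add: inner_linear_simps frame_simps[OF t] dUU_T[OF t] dUU_N[OF t] inner_commute\<close>)
qed

lemma \<nu>_inner:
  assumes "t \<in> I"
  shows "\<nu> t u \<bullet> T t u = 0" "\<nu> t u \<bullet> N t u = cos (\<theta> t u)" "\<nu> t u \<bullet> B t u = sin (\<theta> t u)"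
    "T t u \<bullet> \<nu> t u = 0" "N t u \<bullet> \<nu> t u = cos (\<theta> t u)" "B t u \<bullet> \<nu> t u = sin (\<theta> t u)"
  by (simp_all add: \<nu>_eq inner_linear_simps frame_simps[OF assms])

lemma dUU_\<nu>_inner:
  assumes t: "t \<in> I"
  shows "dUU \<nu> t u \<bullet> N t u = - sin (\<theta> t u) * (dUU \<theta> t u + g t u * \<tau> t u)"
    "dUU \<nu> t u \<bullet> B t u = cos (\<theta> t u) * (dUU \<theta> t u + g t u * \<tau> t u)"
proof -
  have "dUU \<nu> t u = dUU (\<lambda>t v. cos (\<theta> t v) *\<^sub>R N t v + sin (\<theta> t v) *\<^sub>R B t v) t u"
    by (rule dUU_cong) (simp add: \<nu>_eq)
  also have "\<dots> = (cos (\<theta> t u) *\<^sub>R dUU N t u + (- sin (\<theta> t u) * dUU \<theta> t u) *\<^sub>R N t u)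
      + (sin (\<theta> t u) *\<^sub>R dUU B t u + (cos (\<theta> t u) * dUU \<theta> t u) *\<^sub>R B t u)"
    by (intro dUU_eqI has_vector_derivative_add has_vector_derivative_scaleR_vector
        has_vector_derivative_cos has_vector_derivative_sin
        smooth_tuD(3)[OF smooth_\<theta> t] smooth_tuD(3)[OF smooth_N t] smooth_tuD(3)[OF smooth_B t])
  finally have dUU_\<nu>: "dUU \<nu> t u = (cos (\<theta> t u) *\<^sub>R dUU N t u + (- sin (\<theta> t u) * dUU \<theta> t u) *\<^sub>R N t u)
      + (sin (\<theta> t u) *\<^sub>R dUU B t u + (cos (\<theta> t u) * dUU \<theta> t u) *\<^sub>R B t u)" .
  show "dUU \<nu> t u \<bullet> N t u = - sin (\<theta> t u) * (dUU \<theta> t u + g t u * \<tau> t u)"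
    "dUU \<nu> t u \<bullet> B t u = cos (\<theta> t u) * (dUU \<theta> t u + g t u * \<tau> t u)"
    unfolding dUU_\<nu> by (simp_all add: dUU_N[OF t] dUU_B[OF t] inner_linear_simps frame_simps[OF t] algebra_simps)
qed

definition "\<alpha> t u = \<kappa>\<^sub>s t u * cos (\<theta> t u) - \<kappa> t u * \<psi>\<^sub>3 t u * sin (\<theta> t u)"
definition "\<beta> t u = \<kappa>\<^sub>s t u * sin (\<theta> t u) + \<kappa> t u * \<psi>\<^sub>3 t u * cos (\<theta> t u)"

lemma smooth_\<alpha>: "smooth_tu I \<alpha>"
  using smooth_tu_diff[OF smooth_tu_mult[OF smooth_\<kappa>\<^sub>s smooth_tu_cos[OF smooth_\<theta>]]
      smooth_tu_mult[OF smooth_tu_mult[OF smooth_\<kappa> smooth_\<psi>\<^sub>3] smooth_tu_sin[OF smooth_\<theta>]]]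
  by (rule smooth_tu_cong) (simp add: \<alpha>_def)
lemma smooth_\<beta>: "smooth_tu I \<beta>"
  using smooth_tu_add[OF smooth_tu_mult[OF smooth_\<kappa>\<^sub>s smooth_tu_sin[OF smooth_\<theta>]]
      smooth_tu_mult[OF smooth_tu_mult[OF smooth_\<kappa> smooth_\<psi>\<^sub>3] smooth_tu_cos[OF smooth_\<theta>]]]
  by (rule smooth_tu_cong) (simp add: \<beta>_def)

lemma dUU_\<kappa>: "t \<in> I \<Longrightarrow> dUU \<kappa> t u = g t u * \<kappa>\<^sub>s t u"
  using g_pos[of t u] by (simp add: \<kappa>\<^sub>s_eq)

lemma dUU_\<alpha>: "t \<in> I \<Longrightarrow> dUU \<alpha> t u = (\<kappa>\<^sub>s t u * (- sin (\<theta> t u) * dUU \<theta> t u) + dUU \<kappa>\<^sub>s t u * cos (\<theta> t u))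
   - (\<kappa> t u * \<psi>\<^sub>3 t u * (cos (\<theta> t u) * dUU \<theta> t u) + (\<kappa> t u * dUU \<psi>\<^sub>3 t u + dUU \<kappa> t u * \<psi>\<^sub>3 t u) * sin (\<theta> t u))"
  unfolding \<alpha>_def[abs_def]
  by (intro dUU_eqI has_vector_derivative_diff has_vector_derivative_mult has_vector_derivative_cos
      has_vector_derivative_sin smooth_tuD(3)[OF smooth_\<theta>] smooth_tuD(3)[OF smooth_\<kappa>\<^sub>s]
      smooth_tuD(3)[OF smooth_\<kappa>] smooth_tuD(3)[OF smooth_\<psi>\<^sub>3])

lemma dUU_\<beta>: "t \<in> I \<Longrightarrow> dUU \<beta> t u = (\<kappa>\<^sub>s t u * (cos (\<theta> t u) * dUU \<theta> t u) + dUU \<kappa>\<^sub>s t u * sin (\<theta> t u))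
   + (\<kappa> t u * \<psi>\<^sub>3 t u * (- sin (\<theta> t u) * dUU \<theta> t u) + (\<kappa> t u * dUU \<psi>\<^sub>3 t u + dUU \<kappa> t u * \<psi>\<^sub>3 t u) * cos (\<theta> t u))"
  unfolding \<beta>_def[abs_def]
  by (intro dUU_eqI has_vector_derivative_add has_vector_derivative_mult has_vector_derivative_cos
      has_vector_derivative_sin smooth_tuD(3)[OF smooth_\<theta>] smooth_tuD(3)[OF smooth_\<kappa>\<^sub>s]
      smooth_tuD(3)[OF smooth_\<kappa>] smooth_tuD(3)[OF smooth_\<psi>\<^sub>3])

lemma dT_\<gamma>: "t \<in> I \<Longrightarrow> dT I \<gamma> t u = \<kappa> t u *\<^sub>R \<nu> t u"
  using dT_eqI[OF _ flow_\<gamma>] by (simp add: \<kappa>_def \<nu>_def)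

lemma dT_dUU_\<gamma>: "t \<in> I \<Longrightarrow> dT I (dUU \<gamma>) t u = \<kappa> t u *\<^sub>R dUU \<nu> t u + dUU \<kappa> t u *\<^sub>R \<nu> t u"
proof -
  assume t: "t \<in> I"
  have "dT I (dUU \<gamma>) t u = dUU (dT I \<gamma>) t u" by (rule dT_dUU_commute[OF smooth_\<gamma> t])
  also have "\<dots> = dUU (\<lambda>t u. \<kappa> t u *\<^sub>R \<nu> t u) t u" by (rule dUU_cong) (simp add: dT_\<gamma>[OF t])
  also have "\<dots> = \<kappa> t u *\<^sub>R dUU \<nu> t u + dUU \<kappa> t u *\<^sub>R \<nu> t u"
    by (intro dUU_eqI has_vector_derivative_scaleR_vector smooth_tuD(3)[OF smooth_\<kappa> t] smooth_tuD(3)[OF smooth_\<nu> t])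
  finally show ?thesis .
qed

lemma dT_dUU_\<gamma>_product: "t \<in> I \<Longrightarrow> dT I (dUU \<gamma>) t u = g t u *\<^sub>R dT I T t u + dT I g t u *\<^sub>R T t u"
proof -
  assume t: "t \<in> I"
  have "dT I (dUU \<gamma>) t u = dT I (\<lambda>t u. g t u *\<^sub>R T t u) t u"
    by (rule dT_cong[OF _ t]) (simp add: dUU_\<gamma>_eq)
  also have "\<dots> = g t u *\<^sub>R dT I T t u + dT I g t u *\<^sub>R T t u"
    by (intro dT_eqI[OF t] has_vector_derivative_scaleR_vector smooth_tuD(2)[OF smooth_g t] smooth_tuD(2)[OF smooth_T t])
  finally show ?thesis .
qed

lemma dT_T_inner_N: "t \<in> I \<Longrightarrow> g t u * (dT I T t u \<bullet> N t u)
    = \<kappa> t u * (- sin (\<theta> t u) * (dUU \<theta> t u + g t u * \<tau> t u)) + dUU \<kappa> t u * cos (\<theta> t u)"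
proof -
  assume t: "t \<in> I"
  have "dT I (dUU \<gamma>) t u \<bullet> N t u = g t u * (dT I T t u \<bullet> N t u)"
    by (simp add: dT_dUU_\<gamma>_product[OF t] inner_linear_simps frame_simps[OF t])
  moreover have "dT I (dUU \<gamma>) t u \<bullet> N t u
      = \<kappa> t u * (- sin (\<theta> t u) * (dUU \<theta> t u + g t u * \<tau> t u)) + dUU \<kappa> t u * cos (\<theta> t u)"
    by (simp add: dT_dUU_\<gamma>[OF t] inner_linear_simps dUU_\<nu>_inner[OF t] \<nu>_inner[OF t])
  ultimately show ?thesis by simp
qed

lemma dT_T_inner_B: "t \<in> I \<Longrightarrow> g t u * (dT I T t u \<bullet> B t u)
    = \<kappa> t u * (cos (\<theta> t u) * (dUU \<theta> t u + g t u * \<tau> t u)) + dUU \<kappa> t u * sin (\<theta> t u)"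
proof -
  assume t: "t \<in> I"
  have "dT I (dUU \<gamma>) t u \<bullet> B t u = g t u * (dT I T t u \<bullet> B t u)"
    by (simp add: dT_dUU_\<gamma>_product[OF t] inner_linear_simps frame_simps[OF t])
  moreover have "dT I (dUU \<gamma>) t u \<bullet> B t u
      = \<kappa> t u * (cos (\<theta> t u) * (dUU \<theta> t u + g t u * \<tau> t u)) + dUU \<kappa> t u * sin (\<theta> t u)"
    by (simp add: dT_dUU_\<gamma>[OF t] inner_linear_simps dUU_\<nu>_inner[OF t] \<nu>_inner[OF t])
  ultimately show ?thesis by simp
qed

lemma dT_T: "t \<in> I \<Longrightarrow> dT I T t u = \<alpha> t u *\<^sub>R N t u + \<beta> t u *\<^sub>R B t u"
proof -
  assume t: "t \<in> I"
  have T_T: "T t u \<bullet> dT I T t u + dT I T t u \<bullet> T t u = 0"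
    by (rule dT_inner_const_eq_0[OF smooth_T smooth_T t]) (rule T_unit)
  show ?thesis
  proof (rule frame_eqI[where u=u, OF t])
    show "dT I T t u \<bullet> T t u = (\<alpha> t u *\<^sub>R N t u + \<beta> t u *\<^sub>R B t u) \<bullet> T t u"
      using T_T by (simp add: inner_linear_simps frame_simps[OF t] inner_commute)
    show "dT I T t u \<bullet> N t u = (\<alpha> t u *\<^sub>R N t u + \<beta> t u *\<^sub>R B t u) \<bullet> N t u"
      using dT_T_inner_N[OF t] g_pos[OF t, of u]
      by (simp add: inner_linear_simps frame_simps[OF t] \<alpha>_def \<kappa>\<^sub>s_eq \<psi>\<^sub>3_eq field_simps)
    show "dT I T t u \<bullet> B t u = (\<alpha> t u *\<^sub>R N t u + \<beta> t u *\<^sub>R B t u) \<bullet> B t u"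
      using dT_T_inner_B[OF t] g_pos[OF t, of u]
      by (simp add: inner_linear_simps frame_simps[OF t] \<beta>_def \<kappa>\<^sub>s_eq \<psi>\<^sub>3_eq field_simps)
  qed
qed

lemma dT_dUU_T: "t \<in> I \<Longrightarrow> dT I (dUU T) t u = (\<alpha> t u *\<^sub>R dUU N t u + dUU \<alpha> t u *\<^sub>R N t u)
    + (\<beta> t u *\<^sub>R dUU B t u + dUU \<beta> t u *\<^sub>R B t u)"
proof -
  assume t: "t \<in> I"
  have "dT I (dUU T) t u = dUU (dT I T) t u" by (rule dT_dUU_commute[OF smooth_T t])
  also have "\<dots> = dUU (\<lambda>t v. \<alpha> t v *\<^sub>R N t v + \<beta> t v *\<^sub>R B t v) t u"
    by (rule dUU_cong) (simp add: dT_T[OF t])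
  also have "\<dots> = (\<alpha> t u *\<^sub>R dUU N t u + dUU \<alpha> t u *\<^sub>R N t u) + (\<beta> t u *\<^sub>R dUU B t u + dUU \<beta> t u *\<^sub>R B t u)"
    by (intro dUU_eqI has_vector_derivative_add has_vector_derivative_scaleR_vector
        smooth_tuD(3)[OF smooth_\<alpha> t] smooth_tuD(3)[OF smooth_\<beta> t] smooth_tuD(3)[OF smooth_N t] smooth_tuD(3)[OF smooth_B t])
  finally show ?thesis .
qed

lemma dT_dUU_T_inner_B: "t \<in> I \<Longrightarrow> dT I (dUU T) t u \<bullet> B t u = \<alpha> t u * (g t u * \<tau> t u) + dUU \<beta> t u"
  by (simp add: dT_dUU_T dUU_N dUU_B inner_linear_simps frame_simps)

lemma dT_dUU_T_inner_\<nu>: "t \<in> I \<Longrightarrow> dT I (dUU T) t u \<bullet> \<nu> t u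
    = \<alpha> t u * (g t u * \<tau> t u * sin (\<theta> t u)) + dUU \<alpha> t u * cos (\<theta> t u)
      + \<beta> t u * (- (g t u * \<tau> t u * cos (\<theta> t u))) + dUU \<beta> t u * sin (\<theta> t u)"
  by (simp add: dT_dUU_T dUU_N dUU_B inner_linear_simps frame_simps \<nu>_inner)

lemma dT_N_inner_B: "t \<in> I \<Longrightarrow> dT I N t u \<bullet> B t u = (1 / \<kappa> t u) * ((1 / g t u) * (dT I (dUU T) t u \<bullet> B t u))"
proof -
  assume t: "t \<in> I"
  have "dT I N t u = dT I (\<lambda>t v. (1 / \<kappa> t v) *\<^sub>R ((1 / g t v) *\<^sub>R dUU T t v)) t u"
    by (rule dT_cong[OF _ t]) (simp add: N_eq)
  also have "\<dots> = (1 / \<kappa> t u) *\<^sub>R ((1 / g t u) *\<^sub>R dT I (dUU T) t u + dT I (\<lambda>t u. 1 / g t u) t u *\<^sub>R dUU T t u)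
      + dT I (\<lambda>t u. 1 / \<kappa> t u) t u *\<^sub>R ((1 / g t u) *\<^sub>R dUU T t u)"
    by (intro dT_eqI[OF t] has_vector_derivative_scaleR_vector smooth_tuD(2)[OF smooth_inverse_\<kappa> t]
        smooth_tuD(2)[OF smooth_inverse_g t] smooth_tuD(2)[OF smooth_tu_dUU[OF smooth_T] t])
  finally show ?thesis
    by (simp add: inner_linear_simps dUU_T[OF t] frame_simps[OF t])
qed

lemma dT_\<nu>: "t \<in> I \<Longrightarrow> dT I \<nu> t u = (cos (\<theta> t u) *\<^sub>R dT I N t u + (- sin (\<theta> t u) * dT I \<theta> t u) *\<^sub>R N t u)
   + (sin (\<theta> t u) *\<^sub>R dT I B t u + (cos (\<theta> t u) * dT I \<theta> t u) *\<^sub>R B t u)"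
proof -
  assume t: "t \<in> I"
  have "dT I \<nu> t u = dT I (\<lambda>t v. cos (\<theta> t v) *\<^sub>R N t v + sin (\<theta> t v) *\<^sub>R B t v) t u"
    by (rule dT_cong[OF _ t]) (simp add: \<nu>_eq)
  also have "\<dots> = (cos (\<theta> t u) *\<^sub>R dT I N t u + (- sin (\<theta> t u) * dT I \<theta> t u) *\<^sub>R N t u)
      + (sin (\<theta> t u) *\<^sub>R dT I B t u + (cos (\<theta> t u) * dT I \<theta> t u) *\<^sub>R B t u)"
    by (intro dT_eqI[OF t] has_vector_derivative_add has_vector_derivative_scaleR_vector
        has_vector_derivative_cos has_vector_derivative_sin
        smooth_tuD(2)[OF smooth_\<theta> t] smooth_tuD(2)[OF smooth_N t] smooth_tuD(2)[OF smooth_B t])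
  finally show ?thesis .
qed

lemma dUU_T_inner_dT_\<nu>: "t \<in> I \<Longrightarrow> dUU T t u \<bullet> dT I \<nu> t u
    = - (g t u * \<kappa> t u * sin (\<theta> t u) * dT I \<theta> t u) - sin (\<theta> t u) * (dT I (dUU T) t u \<bullet> B t u)"
proof -
  assume t: "t \<in> I"
  have "N t u \<bullet> dT I N t u + dT I N t u \<bullet> N t u = 0"
    by (rule dT_inner_const_eq_0[OF smooth_N smooth_N t]) (rule N_unit)
  then have "dUU T t u \<bullet> dT I \<nu> t u
      = g t u * \<kappa> t u * (- sin (\<theta> t u) * dT I \<theta> t u + sin (\<theta> t u) * (N t u \<bullet> dT I B t u))"
    by (simp add: dUU_T[OF t] dT_\<nu>[OF t] inner_linear_simps frame_simps[OF t] inner_commute algebra_simps)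
  moreover have "N t u \<bullet> dT I B t u + dT I N t u \<bullet> B t u = 0"
    by (rule dT_inner_const_eq_0[OF smooth_N smooth_B t]) (rule B_frame)
  ultimately show ?thesis
    using g_pos[OF t, of u] \<kappa>_pos[OF t, of u] by (simp add: dT_N_inner_B[OF t] field_simps) algebra
qed

lemma dS_\<psi>\<^sub>3: "dS (\<gamma> t) (psi3 (\<gamma> t) (\<theta> t)) u = (1 / g t u) * dUU \<psi>\<^sub>3 t u"
  using dS_eq[of t \<psi>\<^sub>3 u] unfolding \<psi>\<^sub>3_def[abs_def] by simp

lemma dS_\<kappa>\<^sub>s: "dS (\<gamma> t) (dS (\<gamma> t) (curv (\<gamma> t))) u = (1 / g t u) * dUU \<kappa>\<^sub>s t u"
  using dS_eq[of t \<kappa>\<^sub>s u] unfolding \<kappa>\<^sub>s_def[abs_def] by simp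

lemma dT_\<theta>: "t \<in> I \<Longrightarrow> dT I \<theta> t u =
    - (\<kappa> t u * ((1 / g t u) * dUU \<psi>\<^sub>3 t u) + 2 * \<kappa>\<^sub>s t u * \<psi>\<^sub>3 t u) * (1 / (\<kappa> t u)\<^sup>2) * \<psi>\<^sub>1 t u
    - \<kappa> t u * inverse (\<psi>\<^sub>2 t u) * (\<psi>\<^sub>3 t u)\<^sup>2
    - ((1 / g t u) * dUU \<kappa>\<^sub>s t u - \<kappa> t u * (\<psi>\<^sub>3 t u)\<^sup>2) * (1 / (\<kappa> t u)\<^sup>2) * \<psi>\<^sub>2 t u"
  using dT_eqI[OF _ flow_\<theta>]
  by (simp add: upsilon0_def dS_\<psi>\<^sub>3 dS_\<kappa>\<^sub>s power_int_minus divide_inverse \<kappa>\<^sub>s_def[symmetric]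
      \<kappa>_def[symmetric] \<psi>\<^sub>1_def[symmetric] \<psi>\<^sub>2_def[symmetric] \<psi>\<^sub>3_def[symmetric])

lemma dT_\<theta>_cleared: "t \<in> I \<Longrightarrow> g t u * \<kappa> t u * sin (\<theta> t u) * dT I \<theta> t u =
   - sin (\<theta> t u) * cos (\<theta> t u) * (\<kappa> t u * dUU \<psi>\<^sub>3 t u + 2 * g t u * \<kappa>\<^sub>s t u * \<psi>\<^sub>3 t u) - g t u * \<kappa> t u * (\<psi>\<^sub>3 t u)\<^sup>2
   - (dUU \<kappa>\<^sub>s t u - g t u * \<kappa> t u * (\<psi>\<^sub>3 t u)\<^sup>2) * (sin (\<theta> t u))\<^sup>2"
  using g_pos[of t u] \<kappa>_pos[of t u] sin_\<theta>_nonzero[of t u]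
  by (simp add: dT_\<theta> \<psi>\<^sub>1_eq \<psi>\<^sub>2_eq field_simps power2_eq_square)

lemma dT_\<psi>\<^sub>1_g: "t \<in> I \<Longrightarrow> dT I (\<lambda>t u. \<psi>\<^sub>1 t u * g t u) t u = dUU \<kappa>\<^sub>s t u"
proof -
  assume t: "t \<in> I"
  have "dT I (\<lambda>t u. \<psi>\<^sub>1 t u * g t u) t u = dT I (\<lambda>t u. dUU T t u \<bullet> \<nu> t u) t u"
    by (rule dT_cong[OF _ t]) (simp add: dUU_T \<nu>_inner \<psi>\<^sub>1_eq)
  also have "\<dots> = dUU T t u \<bullet> dT I \<nu> t u + dT I (dUU T) t u \<bullet> \<nu> t u"
    by (intro dT_eqI[OF t] has_vector_derivative_inner smooth_tuD(2)[OF smooth_\<nu> t]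
        smooth_tuD(2)[OF smooth_tu_dUU[OF smooth_T] t])
  also have "\<dots> = dUU \<kappa>\<^sub>s t u"
    unfolding dUU_T_inner_dT_\<nu>[OF t] dT_dUU_T_inner_\<nu>[OF t] dT_dUU_T_inner_B[OF t]
  proof (rule upsilon0_cancellation[OF sin_cos_squared_add _ dT_\<theta>_cleared[OF t] \<alpha>_def \<beta>_def dUU_\<alpha>[OF t, unfolded dUU_\<kappa>[OF t]] dUU_\<beta>[OF t, unfolded dUU_\<kappa>[OF t]]])
    show "g t u * \<tau> t u = g t u * \<psi>\<^sub>3 t u - dUU \<theta> t u"
      using g_pos[OF t, of u] by (simp add: \<psi>\<^sub>3_eq field_simps)
  qed
  finally show ?thesis .
qed

end

theorem mainTheorem19:
  fixes \<gamma> :: "real \<Rightarrow> real \<Rightarrow> real^3" and \<theta> :: "real \<Rightarrow> real \<Rightarrow> real" and tb :: real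
  assumes tb_pos: "0 < tb"
    and smooth_gamma: "smooth_tu {0..<tb} \<gamma>"
    and smooth_theta: "smooth_tu {0..<tb} \<theta>"
    and periodic_gamma: "\<And>t u. t \<in> {0..<tb} \<Longrightarrow> \<gamma> t (u + 2 * pi) = \<gamma> t u"
    and periodic_theta: "\<And>t u. t \<in> {0..<tb} \<Longrightarrow> \<theta> t (u + 2 * pi) = \<theta> t u"
    and regular: "\<And>t u. t \<in> {0..<tb} \<Longrightarrow> spd (\<gamma> t) u > 0"
    and curv_pos: "\<And>t u. t \<in> {0..<tb} \<Longrightarrow> curv (\<gamma> t) u > 0"
    and psi2_nz: "\<And>t u. t \<in> {0..<tb} \<Longrightarrow> psi2 (\<gamma> t) (\<theta> t) u \<noteq> 0"
    and flow_gamma: "\<And>t u. t \<in> {0..<tb} \<Longrightarrow>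
          ((\<lambda>s. \<gamma> s u) has_vector_derivative (curv (\<gamma> t) u *\<^sub>R nu (\<gamma> t) (\<theta> t) u)) (at t within {0..<tb})"
    and flow_theta: "\<And>t u. t \<in> {0..<tb} \<Longrightarrow>
          ((\<lambda>s. \<theta> s u) has_vector_derivative upsilon0 (\<gamma> t) (\<theta> t) u) (at t within {0..<tb})"
  shows "\<exists>C. \<forall>t\<in>{0..<tb}. integral {0..2*pi} (\<lambda>u. psi1 (\<gamma> t) (\<theta> t) u * spd (\<gamma> t) u) = C"
proof -
  interpret framed_flow "{0..<tb}" \<gamma> \<theta>
  proof
    show "at t within {0..<tb} \<noteq> bot" if "t \<in> {0..<tb}" for t
      using that tb_pos by (simp add: trivial_limit_within)
  qed (use smooth_gamma smooth_theta regular curv_pos psi2_nz flow_gamma flow_theta in auto)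
  have "\<exists>C. \<forall>t\<in>{0..<tb}. integral {0..2*pi} (\<lambda>u. \<psi>\<^sub>1 t u * g t u) = C"
  proof (rule integral_constant_if_dT_eq_dUU)
    show "smooth_tu {0..<tb} (\<lambda>t u. \<psi>\<^sub>1 t u * g t u)"
      by (rule smooth_tu_mult[OF smooth_\<psi>\<^sub>1 smooth_g])
    show "dT {0..<tb} (\<lambda>t u. \<psi>\<^sub>1 t u * g t u) t u = dUU \<kappa>\<^sub>s t u" if "t \<in> {0..<tb}" for t u
      using dT_\<psi>\<^sub>1_g[OF that] .
    show "\<kappa>\<^sub>s t (2 * pi) = \<kappa>\<^sub>s t 0" if "t \<in> {0..<tb}" for t
    proof -
      have "periodic (2 * pi) (\<gamma> t)"
        using periodic_gamma that by (simp add: periodic_def)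
      then have "periodic (2 * pi) (dS (\<gamma> t) (curv (\<gamma> t)))"
        by (intro periodic_dS periodic_curv)
      then show ?thesis
        unfolding periodic_def \<kappa>\<^sub>s_def by (metis add_0)
    qed
  qed (auto intro: smooth_\<kappa>\<^sub>s)
  then show ?thesis
    by (simp add: \<psi>\<^sub>1_def g_def)
qed

end
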